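(* Consider the structure $X^n\xrightarrow{\overline{\mathcal F}}V^n\xrightarrow{\mathcal G^n}A^n$ with loss $l\colon Y\times A\to[0,M]$, and let $\vec P=P_1\times\dots\times P_n\in\mathcal P_{l_{\mathcal G^n\circ\overline{\mathcal F}}}$ be a product probability measure on $Z^n$. Then for all $f,f'\in\mathcal F$, $$d_{[\vec P,l_{\mathcal G^n}]}(\bar f,\bar f')\le d^*_{[\bar P,l_{\mathcal G}]}(f,f'),$$ where $\bar P=\frac1n\sum_{i=1}^n P_i$.
   Context: $Z=X\times Y$; $\mathcal F$ maps $X\to V$, $\mathcal G$ maps $V\to A$; $\bar f=(f,\dots,f)$ acting componentwise on $X^n$; $\mathcal G^n$ the $n$-tuples $\vec g=(g_1,\dots,g_n)$ acting componentwise. $l_{\vec g\circ\bar f}\colon Z^n\to[0,M]$, $((x_1,y_1),\dots,(x_n,y_n))\mapsto\frac1n\sum_i l(y_i,g_i(f(x_i)))$; $l_{\mathcal G^n\circ\overline{\mathcal F}}$ the set of these; $\mathcal P_{\mathcal K}$ denotes probability measures on the $\sigma$-algebra generated by inverse images of open balls under the functions in $\mathcal K$. $l_{g\circ f}(x,y)=l(y,g(f(x)))$. $d_{[\vec P,l_{\mathcal G^n}]}(\bar f,\bar f')=\sup_{\vec g\in\mathcal G^n}\int_{Z^n}|l_{\vec g\circ\bar f}-l_{\vec g\circ\bar f'}|\,d\vec P$ and $d^*_{[P,l_{\mathcal G}]}(f,f')=\int_Z\sup_{g\in\mathcal G}|l_{g\circ f}(z)-l_{g\circ f'}(z)|\,dP(z)$.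 *)

theory Defs
  imports "HOL-Probability.Probability"
begin

definition loss_comp :: "('y \<Rightarrow> 'a \<Rightarrow> real) \<Rightarrow> ('v \<Rightarrow> 'a) \<Rightarrow> ('x \<Rightarrow> 'v) \<Rightarrow> 'x \<times> 'y \<Rightarrow> real" where
  "loss_comp l g f z = l (snd z) (g (f (fst z)))"

definition loss_vec :: "nat \<Rightarrow> ('y \<Rightarrow> 'a \<Rightarrow> real) \<Rightarrow> (nat \<Rightarrow> 'v \<Rightarrow> 'a) \<Rightarrow> ('x \<Rightarrow> 'v) \<Rightarrow> (nat \<Rightarrow> 'x \<times> 'y) \<Rightarrow> real" where
  "loss_vec n l gs f zs = (1 / real n) * (\<Sum>i<n. loss_comp l (gs i) f (zs i))"

definition prod_meas :: "nat \<Rightarrow> (nat \<Rightarrow> ('x \<times> 'y) measure) \<Rightarrow> (nat \<Rightarrow> 'x \<times> 'y) measure" where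
  "prod_meas n P = PiM {..<n} P"

text \<open>The mixture measure (1/n) sum_i P_i (all P_i on the same measurable space as P 0).\<close>
definition mixture :: "nat \<Rightarrow> (nat \<Rightarrow> 'z measure) \<Rightarrow> 'z measure" where
  "mixture n P = measure_of (space (P 0)) (sets (P 0))
      (\<lambda>A. (\<Sum>i<n. emeasure (P i) A) / ennreal (real n))"

definition d_multi :: "nat \<Rightarrow> (nat \<Rightarrow> ('x \<times> 'y) measure) \<Rightarrow> ('y \<Rightarrow> 'a \<Rightarrow> real) \<Rightarrow> ('v \<Rightarrow> 'a) set
    \<Rightarrow> ('x \<Rightarrow> 'v) \<Rightarrow> ('x \<Rightarrow> 'v) \<Rightarrow> real" where
  "d_multi n P l G f f' =
     (SUP gs \<in> PiE {..<n} (\<lambda>_. G).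
        integral\<^sup>L (prod_meas n P) (\<lambda>zs. \<bar>loss_vec n l gs f zs - loss_vec n l gs f' zs\<bar>))"

definition d_star :: "('x \<times> 'y) measure \<Rightarrow> ('y \<Rightarrow> 'a \<Rightarrow> real) \<Rightarrow> ('v \<Rightarrow> 'a) set
    \<Rightarrow> ('x \<Rightarrow> 'v) \<Rightarrow> ('x \<Rightarrow> 'v) \<Rightarrow> real" where
  "d_star P l G f f' =
     integral\<^sup>L P (\<lambda>z. (SUP g \<in> G. \<bar>loss_comp l g f z - loss_comp l g f' z\<bar>))"

end

theory Submission
  imports Defs
begin

text \<open>For fixed task predictors g_1, ..., g_n, the gap between the averaged losses of f and f'
  at (z_1, ..., z_n) is at most the average of the worst-case gaps S(z_i), where
  S(z) = sup_g |l(y, g(f x)) - l(y, g(f' x))|. Under the product measure the i-th summand only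
  sees the marginal P_i, and the average of the P_i-integrals of S is its integral against the
  mixture; this bound does not depend on the g_i.\<close>

lemma integral_PiM_component:
  fixes f :: "'a \<Rightarrow> 'b::{banach, second_countable_topology}"
  assumes "\<And>j. j \<in> I \<Longrightarrow> prob_space (M j)" "i \<in> I" "f \<in> borel_measurable (M i)"
  shows "(\<integral>x. f (x i) \<partial>PiM I M) = (\<integral>x. f x \<partial>M i)"
  using integral_distr[of "\<lambda>x. x i" "PiM I M" "M i" f] assms
  by (simp add: distr_PiM_component)

lemma integrable_PiM_component:
  fixes f :: "'a \<Rightarrow> 'b::{banach, second_countable_topology}"
  assumes "\<And>j. j \<in> I \<Longrightarrow> prob_space (M j)" "i \<in> I" "integrable (M i) f"
  shows "integrable (PiM I M) (\<lambda>x. f (x i))"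
  using integrable_distr_eq[of "\<lambda>x. x i" "PiM I M" "M i" f] assms
  by (simp add: distr_PiM_component)

lemma measurable_subprob_family:
  assumes "\<And>i. i < n \<Longrightarrow> subprob_space (P i)" "\<And>i. i < n \<Longrightarrow> sets (P i) = sets (P 0)"
  shows "P \<in> count_space {..<n} \<rightarrow>\<^sub>M subprob_algebra (P 0)"
  using assms by (auto simp: space_subprob_algebra)

lemma sets_mixture: "sets (mixture n P) = sets (P 0)"
  unfolding mixture_def by (simp add: sets.space_closed sets.sigma_sets_eq)

lemma mixture_eq_scale_bind:
  assumes "n \<ge> 1"
    and "\<And>i. i < n \<Longrightarrow> subprob_space (P i)" "\<And>i. i < n \<Longrightarrow> sets (P i) = sets (P 0)"
  shows "mixture n P = scale_measure (1 / real n) (count_space {..<n} \<bind> P)"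
proof -
  have P: "P \<in> count_space {..<n} \<rightarrow>\<^sub>M subprob_algebra (P 0)"
    using measurable_subprob_family[of n P] assms(2,3) by blast
  have nonempty: "space (count_space {..<n}) \<noteq> {}"
    using assms(1) by (simp add: lessThan_empty_iff)
  let ?B = "count_space {..<n} \<bind> P"
  have sets_B: "sets ?B = sets (P 0)"
    by (rule sets_bind_measurable[OF P nonempty])
  have emeasure_B: "emeasure ?B A = (\<Sum>i<n. emeasure (P i) A)" if "A \<in> sets (P 0)" for A
    using P that by (simp add: emeasure_bind[OF nonempty P] nn_integral_count_space_finite)
  have "scale_measure (1 / real n) ?B
      = measure_of (space (P 0)) (sets (P 0)) (emeasure (scale_measure (1 / real n) ?B))"
    using measure_of_of_measure[of "scale_measure (1 / real n) ?B"] sets_B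
    by (simp add: space_scale_measure sets_eq_imp_space_eq[OF sets_B])
  also have "\<dots> = mixture n P"
    unfolding mixture_def
  proof (rule measure_of_eq)
    show "sets (P 0) \<subseteq> Pow (space (P 0))"
      by (rule sets.space_closed)
    fix A assume "A \<in> sigma_sets (space (P 0)) (sets (P 0))"
    then have A: "A \<in> sets (P 0)"
      by (simp add: sets.sigma_sets_eq)
    show "emeasure (scale_measure (1 / real n) ?B) A = (\<Sum>i<n. emeasure (P i) A) / ennreal (real n)"
      using assms(1) by (simp add: emeasure_B[OF A] divide_ennreal_def inverse_ennreal
          inverse_eq_divide mult.commute)
  qed
  finally show ?thesis ..
qed

lemma nn_integral_mixture:
  assumes "n \<ge> 1"
    and "\<And>i. i < n \<Longrightarrow> subprob_space (P i)" "\<And>i. i < n \<Longrightarrow> sets (P i) = sets (P 0)"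
    and f: "f \<in> borel_measurable (P 0)"
  shows "(\<integral>\<^sup>+z. f z \<partial>mixture n P) = ennreal (1 / real n) * (\<Sum>i<n. \<integral>\<^sup>+z. f z \<partial>P i)"
proof -
  have P: "P \<in> count_space {..<n} \<rightarrow>\<^sub>M subprob_algebra (P 0)"
    using measurable_subprob_family[of n P] assms(2,3) by blast
  have "f \<in> borel_measurable (count_space {..<n} \<bind> P)"
    using f assms(1)
    by (subst measurable_cong_sets[OF sets_bind_measurable[OF P] refl])
      (auto simp: lessThan_empty_iff)
  then show ?thesis
    by (simp add: mixture_eq_scale_bind[of n P, OF assms(1-3)] nn_integral_scale_measure
        nn_integral_bind[OF f P] nn_integral_count_space_finite)
qed

lemma integral_mixture:
  fixes f :: "_ \<Rightarrow> real"
  assumes "n \<ge> 1"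
    and "\<And>i. i < n \<Longrightarrow> subprob_space (P i)" "\<And>i. i < n \<Longrightarrow> sets (P i) = sets (P 0)"
    and integrable: "\<And>i. i < n \<Longrightarrow> integrable (P i) f" and nonneg: "\<And>z. 0 \<le> f z"
  shows "(\<integral>z. f z \<partial>mixture n P) = (\<Sum>i<n. \<integral>z. f z \<partial>P i) / real n"
proof -
  have f: "f \<in> borel_measurable (P 0)"
    using integrable[of 0] assms(1) by simp
  then have ennreal_f: "(\<lambda>z. ennreal (f z)) \<in> borel_measurable (P 0)"
    by measurable
  have "(\<integral>z. f z \<partial>mixture n P) = enn2real (\<integral>\<^sup>+z. f z \<partial>mixture n P)"
    using f nonneg
    by (intro integral_eq_nn_integral) (simp_all add: measurable_cong_sets[OF sets_mixture])
  also have "\<dots> = enn2real (ennreal (1 / real n) * (\<Sum>i<n. ennreal (\<integral>z. f z \<partial>P i)))"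
    using integrable nonneg
    by (simp add: nn_integral_mixture[of n P, OF assms(1-3) ennreal_f] nn_integral_eq_integral)
  also have "\<dots> = (\<Sum>i<n. \<integral>z. f z \<partial>P i) / real n"
    using nonneg
    by (simp add: integral_nonneg sum_nonneg ennreal_mult[symmetric] flip: ennreal_mult')
  finally show ?thesis .
qed

lemma integral_PiM_average:
  fixes f :: "_ \<Rightarrow> real"
  assumes "n \<ge> 1"
    and prob: "\<And>i. i < n \<Longrightarrow> prob_space (P i)" and "\<And>i. i < n \<Longrightarrow> sets (P i) = sets (P 0)"
    and integrable: "\<And>i. i < n \<Longrightarrow> integrable (P i) f" and "\<And>z. 0 \<le> f z"
  shows "(\<integral>zs. (1 / real n) * (\<Sum>i<n. f (zs i)) \<partial>PiM {..<n} P) = (\<integral>z. f z \<partial>mixture n P)"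
proof -
  have "(\<integral>zs. (\<Sum>i<n. f (zs i)) \<partial>PiM {..<n} P) = (\<Sum>i<n. \<integral>zs. f (zs i) \<partial>PiM {..<n} P)"
    using prob integrable
    by (intro Bochner_Integration.integral_sum integrable_PiM_component) auto
  also have "\<dots> = (\<Sum>i<n. \<integral>z. f z \<partial>P i)"
    using prob integrable by (intro sum.cong integral_PiM_component) auto
  also have "\<dots> = real n * (\<integral>z. f z \<partial>mixture n P)"
    using assms(1)
      integral_mixture[of n P f, OF assms(1) prob_space_imp_subprob_space[OF prob] assms(3-5)]
    by simp
  finally show ?thesis
    using assms(1) by (simp add: field_simps)
qed

definition loss_gap :: "('y \<Rightarrow> 'a \<Rightarrow> real) \<Rightarrow> ('v \<Rightarrow> 'a) set \<Rightarrow> ('x \<Rightarrow> 'v) \<Rightarrow> ('x \<Rightarrow> 'v)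
    \<Rightarrow> 'x \<times> 'y \<Rightarrow> real" where
  "loss_gap l G f f' z = (SUP g \<in> G. \<bar>loss_comp l g f z - loss_comp l g f' z\<bar>)"

context
  fixes l :: "'y \<Rightarrow> 'a \<Rightarrow> real" and M :: real
  assumes loss_bounded: "\<And>y a. 0 \<le> l y a \<and> l y a \<le> M"
begin

lemma abs_loss_comp_diff_le: "\<bar>loss_comp l g f z - loss_comp l g f' z\<bar> \<le> M"
  using loss_bounded[of "snd z" "g (f (fst z))"] loss_bounded[of "snd z" "g (f' (fst z))"]
  unfolding loss_comp_def by linarith

lemma abs_loss_comp_diff_le_loss_gap:
  "g \<in> G \<Longrightarrow> \<bar>loss_comp l g f z - loss_comp l g f' z\<bar> \<le> loss_gap l G f f' z"
  unfolding loss_gap_def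
  by (intro cSUP_upper bdd_aboveI2[where M = M] abs_loss_comp_diff_le)

lemma loss_gap_nonneg: "G \<noteq> {} \<Longrightarrow> 0 \<le> loss_gap l G f f' z"
  using abs_loss_comp_diff_le_loss_gap by (meson abs_ge_zero ex_in_conv order_trans)

lemma loss_gap_le: "G \<noteq> {} \<Longrightarrow> loss_gap l G f f' z \<le> M"
  unfolding loss_gap_def by (intro cSUP_least abs_loss_comp_diff_le)

lemma abs_loss_vec_diff_le_loss_gap:
  assumes "\<And>i. i < n \<Longrightarrow> gs i \<in> G"
  shows "\<bar>loss_vec n l gs f zs - loss_vec n l gs f' zs\<bar>
    \<le> (1 / real n) * (\<Sum>i<n. loss_gap l G f f' (zs i))"
proof -
  have "\<bar>loss_vec n l gs f zs - loss_vec n l gs f' zs\<bar>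
      = (1 / real n) * \<bar>\<Sum>i<n. loss_comp l (gs i) f (zs i) - loss_comp l (gs i) f' (zs i)\<bar>"
    unfolding loss_vec_def
    by (simp add: sum_subtractf abs_mult flip: right_diff_distrib diff_divide_distrib)
  also have "\<dots> \<le> (1 / real n) * (\<Sum>i<n. \<bar>loss_comp l (gs i) f (zs i) - loss_comp l (gs i) f' (zs i)\<bar>)"
    by (intro mult_left_mono sum_abs) auto
  also have "\<dots> \<le> (1 / real n) * (\<Sum>i<n. loss_gap l G f f' (zs i))"
    using assms by (intro mult_left_mono sum_mono abs_loss_comp_diff_le_loss_gap) auto
  finally show ?thesis .
qed

lemma integrable_loss_gap:
  assumes "prob_space Q" "G \<noteq> {}" "loss_gap l G f f' \<in> borel_measurable Q"
  shows "integrable Q (loss_gap l G f f')"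
proof -
  interpret prob_space Q
    by (rule assms(1))
  have "\<bar>loss_gap l G f f' z\<bar> \<le> M" for z
    using loss_gap_nonneg[OF assms(2), of f f' z] loss_gap_le[OF assms(2), of f f' z] by simp
  then show ?thesis
    using assms(3) by (intro integrable_const_bound[where B = M] AE_I2) simp_all
qed

text \<open>The left integrand need not be measurable: if it is not integrable, its integral is 0.\<close>

lemma integral_abs_loss_vec_diff_le:
  assumes "\<And>i. i < n \<Longrightarrow> prob_space (P i)" "\<And>i. i < n \<Longrightarrow> gs i \<in> G" "G \<noteq> {}"
    and "\<And>i. i < n \<Longrightarrow> integrable (P i) (loss_gap l G f f')"
  shows "(\<integral>zs. \<bar>loss_vec n l gs f zs - loss_vec n l gs f' zs\<bar> \<partial>PiM {..<n} P)
    \<le> (\<integral>zs. (1 / real n) * (\<Sum>i<n. loss_gap l G f f' (zs i)) \<partial>PiM {..<n} P)"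
proof (rule integral_mono_AE')
  show "integrable (PiM {..<n} P) (\<lambda>zs. (1 / real n) * (\<Sum>i<n. loss_gap l G f f' (zs i)))"
    using assms(1,4)
    by (intro integrable_mult_right Bochner_Integration.integrable_sum integrable_PiM_component) auto
  show "AE zs in PiM {..<n} P. \<bar>loss_vec n l gs f zs - loss_vec n l gs f' zs\<bar>
      \<le> (1 / real n) * (\<Sum>i<n. loss_gap l G f f' (zs i))"
    using assms(2) by (intro AE_I2 abs_loss_vec_diff_le_loss_gap)
  show "AE zs in PiM {..<n} P. 0 \<le> (1 / real n) * (\<Sum>i<n. loss_gap l G f f' (zs i))"
    using loss_gap_nonneg[OF assms(3)] by (intro AE_I2 mult_nonneg_nonneg sum_nonneg) simp_all
qed

end

theorem lemmaC16:
  fixes n :: nat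
    and P :: "nat \<Rightarrow> ('x \<times> 'y) measure"
    and l :: "'y \<Rightarrow> 'a \<Rightarrow> real"
    and M :: real
    and F :: "('x \<Rightarrow> 'v) set"
    and G :: "('v \<Rightarrow> 'a) set"
    and f f' :: "'x \<Rightarrow> 'v"
  assumes n_pos: "n \<ge> 1"
    and G_ne: "G \<noteq> {}"
    and loss_range: "\<And>y a. 0 \<le> l y a \<and> l y a \<le> M"
    and prob: "\<And>i. i < n \<Longrightarrow> prob_space (P i)"
    and same_sets: "\<And>i. i < n \<Longrightarrow> sets (P i) = sets (P 0)"
    and meas_loss: "\<And>i g h. i < n \<Longrightarrow> g \<in> G \<Longrightarrow> h \<in> F \<Longrightarrow>
                        loss_comp l g h \<in> borel_measurable (P i)"
    and meas_sup: "\<And>i h h'. i < n \<Longrightarrow> h \<in> F \<Longrightarrow> h' \<in> F \<Longrightarrow>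
                        (\<lambda>z. SUP g \<in> G. \<bar>loss_comp l g h z - loss_comp l g h' z\<bar>) \<in> borel_measurable (P i)"
    and f_in: "f \<in> F" and f'_in: "f' \<in> F"
  shows "d_multi n P l G f f' \<le> d_star (mixture n P) l G f f'"
proof -
  let ?S = "loss_gap l G f f'"
  have S_measurable: "?S \<in> borel_measurable (P i)" if "i < n" for i
    using meas_sup[OF that f_in f'_in] unfolding loss_gap_def[abs_def] .
  have S_integrable: "integrable (P i) ?S" if "i < n" for i
    using prob[OF that] G_ne S_measurable[OF that]
    by (rule integrable_loss_gap[where l = l and M = M, OF loss_range])
  have "d_multi n P l G f f' \<le> (\<integral>zs. (1 / real n) * (\<Sum>i<n. ?S (zs i)) \<partial>PiM {..<n} P)"
    unfolding d_multi_def prod_meas_def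
    using G_ne prob S_integrable
    by (intro cSUP_least integral_abs_loss_vec_diff_le[where l = l and M = M, OF loss_range])
      (auto simp: PiE_eq_empty_iff)
  also have "\<dots> = (\<integral>z. ?S z \<partial>mixture n P)"
    using n_pos prob same_sets S_integrable
      loss_gap_nonneg[where l = l and M = M, OF loss_range G_ne]
    by (rule integral_PiM_average)
  also have "\<dots> = d_star (mixture n P) l G f f'"
    unfolding d_star_def loss_gap_def ..
  finally show ?thesis .
qed

end
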